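(* Consider the algorithm CAB described in the context, and suppose that for all users $i\in\mathcal U$, all $\boldsymbol{x}\in\mathbb R^d$ and all $s\ge0$, $|\boldsymbol{w}_{i,s}^\top\boldsymbol{x}-\boldsymbol{u}_i^\top\boldsymbol{x}|\le\mathrm{CB}_{i,s}(\boldsymbol{x})$. Let $t\le T$ and let $\boldsymbol{x}_t^*\in\arg\max_{\boldsymbol{x}\in C_t}\boldsymbol{u}_{i_t}^\top\boldsymbol{x}$. Then the instantaneous regret of CAB at round $t$ satisfies \[ r_t\le(3\alpha(T)+2)\Big(\mathbf 1\{\widehat N_{i_t,t}(\boldsymbol{x}_t^* )\ne N_{i_t}(\boldsymbol{x}_t^* )\}+\mathbf 1\{\widehat N_{i_t,t}(\bar{\boldsymbol{x}}_t)\ne N_{i_t}(\bar{\boldsymbol{x}}_t)\}\Big)+2\,\mathrm{CB}_{N_{i_t}(\bar{\boldsymbol{x}}_t),t-1}(\bar{\boldsymbol{x}}_t). \]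
   Context: Model. Users $\mathcal U=\{1,\dots,n\}$ with unknown unit vectors $\boldsymbol{u}_i\in\mathbb R^d$; $N_i(\boldsymbol{x})=\{j:\boldsymbol{u}_j^\top\boldsymbol{x}=\boldsymbol{u}_i^\top\boldsymbol{x}\}$. At round $t$ the learner receives $i_t$ and $C_t=\{\boldsymbol{x}_{t,1},..,\boldsymbol{x}_{t,c_t}\}$ with $\|\boldsymbol{x}_{t,k}\|\le1$, picks $\bar{\boldsymbol{x}}_t\in C_t$, observes $y_t\in[-1,1]$. Regret $r_t=\max_{\boldsymbol{x}\in C_t}\boldsymbol{u}_{i_t}^\top\boldsymbol{x}-\boldsymbol{u}_{i_t}^\top\bar{\boldsymbol{x}}_t$. Algorithm CAB (parameters $\gamma>0$, positive nondecreasing function $\alpha$). Initialize $\boldsymbol{b}_{i,0}=\boldsymbol0$, $M_{i,0}=I_d$; $\boldsymbol{w}_{i,s}=M_{i,s}^{-1}\boldsymbol{b}_{i,s}$, $\mathrm{CB}_{i,s}(\boldsymbol{x})=\alpha(s)\sqrt{\boldsymbol{x}^\top M_{i,s}^{-1}\boldsymbol{x}}$; for nonempty $N\subseteq\mathcal U$, $\boldsymbol{w}_{N,s}=\frac1{|N|}\sum_{j\in N}\boldsymbol{w}_{j,s}$, $\mathrm{CB}_{N,s}(\boldsymbol{x})=\frac1{|N|}\sum_{j\in N}\mathrm{CB}_{j,s}(\boldsymbol{x})$. At round $t$, for any $\boldsymbol{x}$ the estimated neighborhood is $\widehat N_{i_t,t}(\boldsymbol{x})=\{j:|\boldsymbol{w}_{i_t,t-1}^\top\boldsymbol{x}-\boldsymbol{w}_{j,t-1}^\top\boldsymbol{x}|\le\mathrm{CB}_{i_t,t-1}(\boldsymbol{x})+\mathrm{CB}_{j,t-1}(\boldsymbol{x})\}$;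 CAB chooses $\bar{\boldsymbol{x}}_t=\boldsymbol{x}_{t,k_t}$ with $k_t\in\arg\max_k(\boldsymbol{w}_{\widehat N_{i_t,t}(\boldsymbol{x}_{t,k}),t-1}^\top\boldsymbol{x}_{t,k}+\mathrm{CB}_{\widehat N_{i_t,t}(\boldsymbol{x}_{t,k}),t-1}(\boldsymbol{x}_{t,k}))$. Update: if $\mathrm{CB}_{i_t,t-1}(\bar{\boldsymbol{x}}_t)\ge\gamma/4$, only user $i_t$ is updated by $M\leftarrow M+\bar{\boldsymbol{x}}_t\bar{\boldsymbol{x}}_t^\top$, $\boldsymbol b\leftarrow\boldsymbol b+y_t\bar{\boldsymbol{x}}_t$; otherwise this update is applied to every $j\in\widehat N_{i_t,t}(\bar{\boldsymbol{x}}_t)$ with $\mathrm{CB}_{j,t-1}(\bar{\boldsymbol{x}}_t)<\gamma/4$; others unchanged. *)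

theory Defs
  imports "HOL-Analysis.Analysis"
begin

text \<open>A state is a pair (M, b) of per-user Gram matrices and vectors.
Round t (t >= 1) uses the state after t-1 rounds, i.e. the state with index t-1.\<close>

type_synonym ('u,'d) cab_st = "('u \<Rightarrow> real^'d^'d) \<times> ('u \<Rightarrow> real^'d)"

definition cab_w :: "('u \<Rightarrow> real^'d^'d) \<Rightarrow> ('u \<Rightarrow> real^'d) \<Rightarrow> 'u \<Rightarrow> real^'d" where
  "cab_w M b i = matrix_inv (M i) *v b i"

definition cab_CB :: "(nat \<Rightarrow> real) \<Rightarrow> nat \<Rightarrow> ('u \<Rightarrow> real^'d^'d) \<Rightarrow> 'u \<Rightarrow> real^'d \<Rightarrow> real" where
  "cab_CB \<alpha> s M i x = \<alpha> s * sqrt (x \<bullet> (matrix_inv (M i) *v x))"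

definition cab_wN :: "('u \<Rightarrow> real^'d^'d) \<Rightarrow> ('u \<Rightarrow> real^'d) \<Rightarrow> 'u set \<Rightarrow> real^'d" where
  "cab_wN M b N = (1 / real (card N)) *\<^sub>R (\<Sum>j\<in>N. cab_w M b j)"

definition cab_CBN :: "(nat \<Rightarrow> real) \<Rightarrow> nat \<Rightarrow> ('u \<Rightarrow> real^'d^'d) \<Rightarrow> 'u set \<Rightarrow> real^'d \<Rightarrow> real" where
  "cab_CBN \<alpha> s M N x = (\<Sum>j\<in>N. cab_CB \<alpha> s M j x) / real (card N)"

definition cab_Nhat :: "(nat \<Rightarrow> real) \<Rightarrow> nat \<Rightarrow> ('u \<Rightarrow> real^'d^'d) \<Rightarrow> ('u \<Rightarrow> real^'d) \<Rightarrow> 'u \<Rightarrow> real^'d \<Rightarrow> 'u set" where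
  "cab_Nhat \<alpha> s M b i x =
     {j. \<bar>cab_w M b i \<bullet> x - cab_w M b j \<bullet> x\<bar> \<le> cab_CB \<alpha> s M i x + cab_CB \<alpha> s M j x}"

definition true_N :: "('u \<Rightarrow> real^'d) \<Rightarrow> 'u \<Rightarrow> real^'d \<Rightarrow> 'u set" where
  "true_N u i x = {j. u j \<bullet> x = u i \<bullet> x}"

definition cab_index :: "(nat \<Rightarrow> real) \<Rightarrow> nat \<Rightarrow> ('u \<Rightarrow> real^'d^'d) \<Rightarrow> ('u \<Rightarrow> real^'d) \<Rightarrow> 'u \<Rightarrow> real^'d \<Rightarrow> real" where
  "cab_index \<alpha> s M b i x =
     cab_wN M b (cab_Nhat \<alpha> s M b i x) \<bullet> x + cab_CBN \<alpha> s M (cab_Nhat \<alpha> s M b i x) x"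

definition outer :: "real^'d \<Rightarrow> real^'d^'d" where
  "outer x = (\<chi> p q. x $ p * x $ q)"

text \<open>State of CAB after s rounds, given user sequence ii, context lists C,
rewards y and chosen indices k (round t plays C t ! k t).\<close>
fun cab_state :: "(nat \<Rightarrow> real) \<Rightarrow> real \<Rightarrow> (nat \<Rightarrow> 'u) \<Rightarrow> (nat \<Rightarrow> (real^'d) list)
    \<Rightarrow> (nat \<Rightarrow> real) \<Rightarrow> (nat \<Rightarrow> nat) \<Rightarrow> nat \<Rightarrow> ('u,'d) cab_st" where
  "cab_state \<alpha> \<gamma> ii C y k 0 = ((\<lambda>_. mat 1), (\<lambda>_. 0))"
| "cab_state \<alpha> \<gamma> ii C y k (Suc s) =
    (let st = cab_state \<alpha> \<gamma> ii C y k s; M = fst st; b = snd st;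
         t = Suc s; x = C t ! k t;
         upd = (if cab_CB \<alpha> s M (ii t) x \<ge> \<gamma> / 4 then {ii t}
                else {j \<in> cab_Nhat \<alpha> s M b (ii t) x. cab_CB \<alpha> s M j x < \<gamma> / 4})
     in ((\<lambda>j. if j \<in> upd then M j + outer x else M j),
         (\<lambda>j. if j \<in> upd then b j + y t *\<^sub>R x else b j)))"

end

theory Submission
  imports Defs
begin

text \<open>If the estimated neighbourhoods of both the optimal arm and the played arm are
correct, the averaged estimate over the true neighbourhood is within the averaged
confidence bound of the true reward, because every member of the true neighbourhood
has the same reward as the current user. Optimism then gives
u\<bullet>x* \<le> index(x*) \<le> index(x) \<le> u\<bullet>x + 2 CB. Otherwise one of the indicators is 1 and the
regret is at most 2, as all rewards lie in [-1,1].\<close>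

lemma abs_average_le:
  fixes f g :: "'a \<Rightarrow> real"
  assumes "finite N" "N \<noteq> {}" "\<forall>j\<in>N. \<bar>f j - c\<bar> \<le> g j"
  shows "\<bar>(\<Sum>j\<in>N. f j) / real (card N) - c\<bar> \<le> (\<Sum>j\<in>N. g j) / real (card N)"
proof -
  have card_pos: "real (card N) > 0"
    using assms(1,2) by (simp add: card_gt_0_iff)
  have "\<bar>(\<Sum>j\<in>N. f j) - (\<Sum>j\<in>N. c)\<bar> \<le> (\<Sum>j\<in>N. \<bar>f j - c\<bar>)"
    unfolding sum_subtractf[symmetric] by (rule sum_abs)
  also have "\<dots> \<le> (\<Sum>j\<in>N. g j)"
    using assms(3) by (intro sum_mono) blast
  finally have "\<bar>(\<Sum>j\<in>N. f j) - real (card N) * c\<bar> \<le> (\<Sum>j\<in>N. g j)"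
    by simp
  with card_pos show ?thesis
    by (simp add: abs_le_iff field_simps)
qed

lemma cab_wN_inner:
  "cab_wN M b N \<bullet> x = (\<Sum>j\<in>N. cab_w M b j \<bullet> x) / real (card N)"
  by (simp add: cab_wN_def inner_sum_left)

lemma true_N_nonempty: "true_N u i x \<noteq> {}"
  by (auto simp: true_N_def)

lemma cab_wN_true_N_close:
  fixes u :: "'u::finite \<Rightarrow> real^'d"
  assumes conf: "\<forall>j x. \<bar>cab_w M b j \<bullet> x - u j \<bullet> x\<bar> \<le> cab_CB \<alpha> s M j x"
  shows "\<bar>cab_wN M b (true_N u i x) \<bullet> x - u i \<bullet> x\<bar> \<le> cab_CBN \<alpha> s M (true_N u i x) x"
  unfolding cab_wN_inner cab_CBN_def
proof (rule abs_average_le[OF finite true_N_nonempty], intro ballI)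
  fix j
  assume "j \<in> true_N u i x"
  then have "u j \<bullet> x = u i \<bullet> x"
    by (simp add: true_N_def)
  with conf[rule_format, of j x]
  show "\<bar>cab_w M b j \<bullet> x - u i \<bullet> x\<bar> \<le> cab_CB \<alpha> s M j x"
    by simp
qed

lemma cab_index_bounds_if_Nhat_correct:
  fixes u :: "'u::finite \<Rightarrow> real^'d"
  assumes conf: "\<forall>j x. \<bar>cab_w M b j \<bullet> x - u j \<bullet> x\<bar> \<le> cab_CB \<alpha> s M j x"
    and correct: "cab_Nhat \<alpha> s M b i x = true_N u i x"
  shows "u i \<bullet> x \<le> cab_index \<alpha> s M b i x"
    and "cab_index \<alpha> s M b i x \<le> u i \<bullet> x + 2 * cab_CBN \<alpha> s M (true_N u i x) x"
  using cab_wN_true_N_close[OF conf, of i x]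
  unfolding cab_index_def correct abs_le_iff by linarith+

lemma cab_CBN_nonneg:
  assumes conf: "\<forall>j. \<bar>cab_w M b j \<bullet> x - u j \<bullet> x\<bar> \<le> cab_CB \<alpha> s M j x"
  shows "0 \<le> cab_CBN \<alpha> s M N x"
proof -
  have "\<forall>j. 0 \<le> cab_CB \<alpha> s M j x"
    using conf abs_ge_zero order_trans by blast
  then show ?thesis
    by (simp add: cab_CBN_def sum_nonneg)
qed

lemma inner_unit_diff_le_2:
  fixes v x x' :: "'a::real_inner"
  assumes "norm v = 1" "norm x \<le> 1" "norm x' \<le> 1"
  shows "v \<bullet> x - v \<bullet> x' \<le> 2"
proof -
  have "\<bar>v \<bullet> z\<bar> \<le> 1" if "norm z \<le> 1" for z
    using Cauchy_Schwarz_ineq2[of v z] that assms(1) by simp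
  then show ?thesis
    using assms(2,3) by (smt (verit))
qed

lemma cab_regret_le_misses_plus_CBN:
  fixes u :: "'u::finite \<Rightarrow> real^'d"
  assumes conf: "\<forall>j z. \<bar>cab_w M b j \<bullet> z - u j \<bullet> z\<bar> \<le> cab_CB \<alpha> s M j z"
    and optimism: "cab_index \<alpha> s M b i xstar \<le> cab_index \<alpha> s M b i x"
    and gap: "u i \<bullet> xstar - u i \<bullet> x \<le> 2"
    and "0 \<le> a"
  shows "u i \<bullet> xstar - u i \<bullet> x
    \<le> (a + 2) * (of_bool (cab_Nhat \<alpha> s M b i xstar \<noteq> true_N u i xstar)
                 + of_bool (cab_Nhat \<alpha> s M b i x \<noteq> true_N u i x))
      + 2 * cab_CBN \<alpha> s M (true_N u i x) x"
    (is "_ \<le> (a + 2) * ?miss + _")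
proof (cases "?miss = 0")
  case True
  then have "u i \<bullet> xstar \<le> cab_index \<alpha> s M b i xstar"
    and "cab_index \<alpha> s M b i x \<le> u i \<bullet> x + 2 * cab_CBN \<alpha> s M (true_N u i x) x"
    using cab_index_bounds_if_Nhat_correct[OF conf] by (auto simp: add_nonneg_eq_0_iff)
  with optimism True show ?thesis
    by simp
next
  case False
  then have "1 \<le> ?miss"
    by auto
  then have "a + 2 \<le> (a + 2) * ?miss"
    using \<open>0 \<le> a\<close> by (simp add: mult_le_cancel_left1)
  moreover have "0 \<le> cab_CBN \<alpha> s M (true_N u i x) x"
    using conf by (intro cab_CBN_nonneg[of M b x u]) blast
  ultimately show ?thesis
    using gap \<open>0 \<le> a\<close> by linarith
qed

theorem lemma4:
  fixes u :: "'u::finite \<Rightarrow> real^'d"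
    and \<alpha> :: "nat \<Rightarrow> real" and \<gamma> :: real
    and ii :: "nat \<Rightarrow> 'u" and C :: "nat \<Rightarrow> (real^'d) list"
    and y :: "nat \<Rightarrow> real" and k :: "nat \<Rightarrow> nat"
    and t T :: nat and xstar :: "real^'d"
  assumes unit: "\<forall>i. norm (u i) = 1"
    and gamma_pos: "\<gamma> > 0"
    and alpha_pos: "\<forall>s. \<alpha> s > 0" and alpha_mono: "mono \<alpha>"
    and ctx_ne: "\<forall>t'\<ge>1. C t' \<noteq> []"
    and ctx_norm: "\<forall>t'\<ge>1. \<forall>x\<in>set (C t'). norm x \<le> 1"
    and rew: "\<forall>t'\<ge>1. \<bar>y t'\<bar> \<le> 1"
    and choice: "\<forall>t'\<ge>1. k t' < length (C t') \<and>
        (\<forall>k'<length (C t').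
           cab_index \<alpha> (t' - 1) (fst (cab_state \<alpha> \<gamma> ii C y k (t' - 1)))
               (snd (cab_state \<alpha> \<gamma> ii C y k (t' - 1))) (ii t') (C t' ! k')
         \<le> cab_index \<alpha> (t' - 1) (fst (cab_state \<alpha> \<gamma> ii C y k (t' - 1)))
               (snd (cab_state \<alpha> \<gamma> ii C y k (t' - 1))) (ii t') (C t' ! k t'))"
    and conf: "\<forall>i x s. \<bar>cab_w (fst (cab_state \<alpha> \<gamma> ii C y k s)) (snd (cab_state \<alpha> \<gamma> ii C y k s)) i \<bullet> x
                          - u i \<bullet> x\<bar>
                      \<le> cab_CB \<alpha> s (fst (cab_state \<alpha> \<gamma> ii C y k s)) i x"
    and t_ge: "1 \<le> t" and t_le: "t \<le> T"
    and xstar_in: "xstar \<in> set (C t)"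
    and xstar_max: "\<forall>x\<in>set (C t). u (ii t) \<bullet> x \<le> u (ii t) \<bullet> xstar"
  shows "Max ((\<lambda>x. u (ii t) \<bullet> x) ` set (C t)) - u (ii t) \<bullet> (C t ! k t)
    \<le> (3 * \<alpha> T + 2) *
        (of_bool (cab_Nhat \<alpha> (t - 1) (fst (cab_state \<alpha> \<gamma> ii C y k (t - 1)))
                    (snd (cab_state \<alpha> \<gamma> ii C y k (t - 1))) (ii t) xstar
                  \<noteq> true_N u (ii t) xstar)
       + of_bool (cab_Nhat \<alpha> (t - 1) (fst (cab_state \<alpha> \<gamma> ii C y k (t - 1)))
                    (snd (cab_state \<alpha> \<gamma> ii C y k (t - 1))) (ii t) (C t ! k t)
                  \<noteq> true_N u (ii t) (C t ! k t)))
      + 2 * cab_CBN \<alpha> (t - 1) (fst (cab_state \<alpha> \<gamma> ii C y k (t - 1)))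
              (true_N u (ii t) (C t ! k t)) (C t ! k t)"
proof -
  define M b i x s where "M = fst (cab_state \<alpha> \<gamma> ii C y k (t - 1))"
    and "b = snd (cab_state \<alpha> \<gamma> ii C y k (t - 1))" and "i = ii t" and "x = C t ! k t"
    and "s = t - 1"
  note defs = M_def b_def i_def x_def s_def
  have conf_s: "\<forall>j z. \<bar>cab_w M b j \<bullet> z - u j \<bullet> z\<bar> \<le> cab_CB \<alpha> s M j z"
    using conf unfolding M_def b_def s_def by blast
  have x_in: "x \<in> set (C t)"
    using choice t_ge by (simp add: x_def)
  obtain kstar where "kstar < length (C t)" "C t ! kstar = xstar"
    using xstar_in by (meson in_set_conv_nth)
  then have optimism: "cab_index \<alpha> s M b i xstar \<le> cab_index \<alpha> s M b i x"
    using choice t_ge unfolding defs by metis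
  have "u i \<bullet> xstar - u i \<bullet> x \<le> 2"
    using inner_unit_diff_le_2 unit ctx_norm t_ge xstar_in x_in by blast
  with conf_s optimism have "u i \<bullet> xstar - u i \<bullet> x
    \<le> (3 * \<alpha> T + 2) * (of_bool (cab_Nhat \<alpha> s M b i xstar \<noteq> true_N u i xstar)
                      + of_bool (cab_Nhat \<alpha> s M b i x \<noteq> true_N u i x))
      + 2 * cab_CBN \<alpha> s M (true_N u i x) x"
    using alpha_pos[rule_format, of T] by (intro cab_regret_le_misses_plus_CBN) auto
  moreover have "Max ((\<lambda>z. u i \<bullet> z) ` set (C t)) = u i \<bullet> xstar"
    using xstar_max xstar_in by (intro Max_eqI) (auto simp: i_def)
  ultimately show ?thesis
    unfolding defs by simp
qed

end
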